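(* Let $0<\lambda<\mu$ and put $\nu=\lambda/\mu<1$. Then the normal state \[ \rho=(1-\nu^2)\sum_{n\ge0}\nu^{2n}|e_n\rangle\langle e_n| \] is invariant for the quantum Markov semigroup $\mathcal T$, i.e. $\mathcal T_{*t}(\rho)=\rho$ for all $t\ge0$ (equivalently $\rho$ lies in the domain of the generator $\mathcal L_*$ of the predual semigroup and $\mathcal L_*(\rho)=0$).
   Context: Let $\mathsf h=\ell^2(\mathbb N)$ with canonical orthonormal basis $(e_n)_{n\ge0}$ and let $N$ be the number operator, $Ne_n=ne_n$. Fix $r>0$ and set $\omega_n=n(n+r-1)$ for $n\ge0$. On $\mathrm{Dom}(N)=\{u=\sum_n u_ne_n:\sum_n n^2|u_n|^2<\infty\}$ define $Be_n=\omega_n^{1/2}e_{n-1}$ for $n\ge1$, $Be_0=0$, and $B^+e_n=\omega_{n+1}^{1/2}e_{n+1}$. Fix real numbers $\lambda,\mu>0$ and $\zeta^+,\zeta^-$. Let $G$ be the operator with domain $\mathrm{Dom}(N^2)$ given by $Ge_n=-\big((\tfrac{\lambda^2}{2}+i\zeta^+)\omega_{n+1}+(\tfrac{\mu^2}{2}+i\zeta^-)\omega_n\big)e_n$ (i.e. $G=-\frac{\lambda^2}{2}BB^+-\frac{\mu^2}{2}B^+B-i(\zeta^+BB^++\zeta^-B^+B)$), generating the contraction semigroup $P_t=e^{tG}$, and let $L_1=\mu B$, $L_2=\lambda B^+$. The quantum Markov semigroup $\mathcal T=(\mathcal T_t)_{t\ge0}$ on $\mathcal B(\mathsf h)$ is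 the minimal quantum dynamical semigroup associated with $G,L_1,L_2$, i.e. the minimal solution of $\langle v,\mathcal T_t(x)u\rangle=\langle P_tv,xP_tu\rangle+\sum_{\ell=1}^2\int_0^t\langle L_\ell P_{t-s}v,\mathcal T_s(x)L_\ell P_{t-s}u\rangle\,ds$ for $u,v\in\mathrm{Dom}(G)$, $x\in\mathcal B(\mathsf h)$; its formal generator is $\mathcal L(x)=-\frac{\lambda^2}{2}(BB^+x-2BxB^++xBB^+)-\frac{\mu^2}{2}(B^+Bx-2B^+xB+xB^+B)+i[\zeta^+BB^++\zeta^-B^+B,x]$. It is identity preserving when $\lambda\le\mu$. $\mathcal T_{*}=(\mathcal T_{*t})_{t\ge0}$ denotes the predual semigroup acting on trace-class operators. *)

theory Defs
  imports "HOL-Analysis.Analysis"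
begin

text \<open>Concrete model of h = l2(N): vectors are functions nat => complex
  (coordinates w.r.t. the canonical basis e_n); operators are maps on such
  functions, only their behaviour on square-summable vectors matters.\<close>

type_synonym vec = "nat \<Rightarrow> complex"
type_synonym op = "vec \<Rightarrow> vec"

definition l2 :: "vec \<Rightarrow> bool" where
  "l2 u \<longleftrightarrow> summable (\<lambda>n. (cmod (u n))^2)"

definition inn :: "vec \<Rightarrow> vec \<Rightarrow> complex" where
  "inn v u = (\<Sum>n. cnj (v n) * u n)"

definition basis :: "nat \<Rightarrow> vec" where
  "basis n = (\<lambda>k. if k = n then 1 else 0)"

definition bop :: "op \<Rightarrow> bool" where
  "bop x \<longleftrightarrow>
     (\<forall>u. l2 u \<longrightarrow> l2 (x u)) \<and>
     (\<forall>u v. l2 u \<longrightarrow> l2 v \<longrightarrow> x (\<lambda>k. u k + v k) = (\<lambda>k. x u k + x v k)) \<and>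
     (\<forall>c u. l2 u \<longrightarrow> x (\<lambda>k. c * u k) = (\<lambda>k. c * x u k)) \<and>
     (\<exists>C. \<forall>u. l2 u \<longrightarrow> (\<Sum>n. (cmod (x u n))^2) \<le> C * (\<Sum>n. (cmod (u n))^2))"

definition opos :: "op \<Rightarrow> bool" where
  "opos x \<longleftrightarrow> (\<forall>u. l2 u \<longrightarrow> Im (inn u (x u)) = 0 \<and> 0 \<le> Re (inn u (x u)))"

definition ople :: "op \<Rightarrow> op \<Rightarrow> bool" where
  "ople x y \<longleftrightarrow> opos (\<lambda>u k. y u k - x u k)"

definition omega :: "real \<Rightarrow> nat \<Rightarrow> real" where
  "omega r n = real n * (real n + r - 1)"

text \<open>B e_n = omega_n^(1/2) e_(n-1), B^+ e_n = omega_(n+1)^(1/2) e_(n+1), in coordinates.\<close>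
definition Bop :: "real \<Rightarrow> op" where
  "Bop r u = (\<lambda>k. complex_of_real (sqrt (omega r (Suc k))) * u (Suc k))"

definition Bplus :: "real \<Rightarrow> op" where
  "Bplus r u = (\<lambda>k. if k = 0 then 0 else complex_of_real (sqrt (omega r k)) * u (k - 1))"

text \<open>Eigenvalues of G: G e_n = gdiag n e_n.\<close>
definition gdiag :: "real \<Rightarrow> real \<Rightarrow> real \<Rightarrow> real \<Rightarrow> real \<Rightarrow> nat \<Rightarrow> complex" where
  "gdiag r lam mu zp zm n =
     - ((complex_of_real (lam^2/2) + \<i> * complex_of_real zp) * complex_of_real (omega r (Suc n))
        + (complex_of_real (mu^2/2) + \<i> * complex_of_real zm) * complex_of_real (omega r n))"

definition Psg :: "real \<Rightarrow> real \<Rightarrow> real \<Rightarrow> real \<Rightarrow> real \<Rightarrow> real \<Rightarrow> op" where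
  "Psg r lam mu zp zm t u = (\<lambda>k. exp (complex_of_real t * gdiag r lam mu zp zm k) * u k)"

text \<open>Dom(G) = Dom(N^2).\<close>
definition domG :: "vec \<Rightarrow> bool" where
  "domG u \<longleftrightarrow> l2 u \<and> summable (\<lambda>n. (real n)^4 * (cmod (u n))^2)"

definition L1 :: "real \<Rightarrow> real \<Rightarrow> op" where
  "L1 r mu u = (\<lambda>k. complex_of_real mu * Bop r u k)"

definition L2 :: "real \<Rightarrow> real \<Rightarrow> op" where
  "L2 r lam u = (\<lambda>k. complex_of_real lam * Bplus r u k)"

definition qds_solution :: "real \<Rightarrow> real \<Rightarrow> real \<Rightarrow> real \<Rightarrow> real \<Rightarrow> (real \<Rightarrow> op \<Rightarrow> op) \<Rightarrow> bool" where
  "qds_solution r lam mu zp zm T \<longleftrightarrow>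
    (\<forall>t\<ge>0. \<forall>x. bop x \<longrightarrow> bop (T t x)) \<and>
    (\<forall>t\<ge>0. \<forall>x. bop x \<longrightarrow> opos x \<longrightarrow> opos (T t x)) \<and>
    (\<forall>t\<ge>0. \<forall>x. bop x \<longrightarrow> (\<forall>u v. domG u \<longrightarrow> domG v \<longrightarrow>
       (\<lambda>s. inn (L1 r mu (Psg r lam mu zp zm (t - s) v)) (T s x (L1 r mu (Psg r lam mu zp zm (t - s) u))))
          integrable_on {0..t} \<and>
       (\<lambda>s. inn (L2 r lam (Psg r lam mu zp zm (t - s) v)) (T s x (L2 r lam (Psg r lam mu zp zm (t - s) u))))
          integrable_on {0..t} \<and>
       inn v (T t x u) =
         inn (Psg r lam mu zp zm t v) (x (Psg r lam mu zp zm t u))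
         + integral {0..t} (\<lambda>s. inn (L1 r mu (Psg r lam mu zp zm (t - s) v)) (T s x (L1 r mu (Psg r lam mu zp zm (t - s) u))))
         + integral {0..t} (\<lambda>s. inn (L2 r lam (Psg r lam mu zp zm (t - s) v)) (T s x (L2 r lam (Psg r lam mu zp zm (t - s) u))))))"

definition minimal_qds :: "real \<Rightarrow> real \<Rightarrow> real \<Rightarrow> real \<Rightarrow> real \<Rightarrow> (real \<Rightarrow> op \<Rightarrow> op) \<Rightarrow> bool" where
  "minimal_qds r lam mu zp zm T \<longleftrightarrow>
    qds_solution r lam mu zp zm T \<and>
    (\<forall>t\<ge>0. \<forall>x y. bop x \<longrightarrow> bop y \<longrightarrow> (\<forall>u. l2 u \<longrightarrow>
        T t (\<lambda>w k. x w k + y w k) u = (\<lambda>k. T t x u k + T t y u k))) \<and>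
    (\<forall>t\<ge>0. \<forall>x c. bop x \<longrightarrow> (\<forall>u. l2 u \<longrightarrow>
        T t (\<lambda>w k. c * x w k) u = (\<lambda>k. c * T t x u k))) \<and>
    (\<forall>T'. qds_solution r lam mu zp zm T' \<longrightarrow>
        (\<forall>t\<ge>0. \<forall>x. bop x \<longrightarrow> opos x \<longrightarrow> ople (T t x) (T' t x)))"

text \<open>tr(rho y) for rho = (1 - nu^2) sum_n nu^(2n) |e_n><e_n|.\<close>
definition tr_rho :: "real \<Rightarrow> op \<Rightarrow> complex" where
  "tr_rho nu y = (\<Sum>n. complex_of_real ((1 - nu^2) * nu^(2*n)) * inn (basis n) (y (basis n)))"

end

(* Testing the integral equation on u = v = e_n shows that the diagonal entries
   d_n(t) = <e_n, T_t(x) e_n> solve the birth-death master equation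
     d_n' = mu^2 omega_n (d_(n-1) - d_n) + lam^2 omega_(n+1) (d_(n+1) - d_n).
   The weights p_n = (1 - nu^2) nu^(2n) are in detailed balance,
   p_(n+1) mu^2 omega_(n+1) = p_n lam^2 omega_(n+1), so the derivative of the partial sum
   sum_(n<=N) p_n d_n telescopes to the flux p_N lam^2 omega_(N+1) (d_(N+1) - d_N).
   Minimality bounds all d_n uniformly: the identity solves the integral equation, so
   T_t(1) <= 1, and a self-adjoint x lies between -||x|| 1 and ||x|| 1.  As nu < 1 the flux
   vanishes in the limit, hence tr(rho T_t(x)) = sum_n p_n d_n(t) does not depend on t. *)

theory Submission
  imports Defs
begin

section \<open>Square-summable sequences\<close>

definition sqnorm :: "vec \<Rightarrow> real" where
  "sqnorm u = (\<Sum>n. (cmod (u n))^2)"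

definition trunc :: "nat \<Rightarrow> vec \<Rightarrow> vec" where
  "trunc N u = (\<lambda>k. if k < N then u k else 0)"

lemma sqnorm_nonneg: "l2 u \<Longrightarrow> 0 \<le> sqnorm u"
  unfolding sqnorm_def l2_def by (auto intro: suminf_nonneg)

lemma cmod_add_power2_le: "(cmod (a + b))^2 \<le> 2 * (cmod a)^2 + 2 * (cmod b)^2"
proof -
  have "(cmod (a + b))^2 \<le> (cmod a + cmod b)^2"
    by (simp add: power_mono norm_triangle_ineq)
  also have "\<dots> \<le> 2 * (cmod a)^2 + 2 * (cmod b)^2"
    unfolding power2_sum using sum_squares_bound[of "cmod a" "cmod b"] by linarith
  finally show ?thesis .
qed

lemma l2_add: assumes "l2 u" "l2 v" shows "l2 (\<lambda>k. u k + v k)"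
  unfolding l2_def
proof (rule summable_comparison_test')
  show "summable (\<lambda>n. 2 * (cmod (u n))^2 + 2 * (cmod (v n))^2)"
    using assms unfolding l2_def by (intro summable_add summable_mult)
qed (simp add: cmod_add_power2_le)

lemma sqnorm_add_le:
  assumes "l2 u" "l2 v" shows "sqnorm (\<lambda>k. u k + v k) \<le> 2 * sqnorm u + 2 * sqnorm v"
proof -
  have "sqnorm (\<lambda>k. u k + v k) \<le> (\<Sum>n. 2 * (cmod (u n))^2 + 2 * (cmod (v n))^2)"
    using assms l2_add[OF assms] unfolding sqnorm_def l2_def
    by (intro suminf_le cmod_add_power2_le summable_add summable_mult)
  also have "\<dots> = 2 * sqnorm u + 2 * sqnorm v"
    using assms unfolding l2_def sqnorm_def by (simp add: suminf_add[symmetric] suminf_mult summable_mult)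
  finally show ?thesis .
qed

lemma l2_cmult: "l2 u \<Longrightarrow> l2 (\<lambda>k. c * u k)"
  using summable_mult[of _ "(cmod c)^2"]
  unfolding l2_def by (simp add: norm_mult power_mult_distrib)

lemma sqnorm_cmult: "l2 u \<Longrightarrow> sqnorm (\<lambda>k. c * u k) = (cmod c)^2 * sqnorm u"
  unfolding l2_def sqnorm_def by (simp add: norm_mult power_mult_distrib suminf_mult)

lemma l2_diff: "l2 u \<Longrightarrow> l2 v \<Longrightarrow> l2 (\<lambda>k. u k - v k)"
  using l2_add[of u "\<lambda>k. (-1) * v k"] l2_cmult[of v "-1"] by simp

lemma l2_finite_support: "finite S \<Longrightarrow> (\<And>k. k \<notin> S \<Longrightarrow> u k = 0) \<Longrightarrow> l2 u"
  unfolding l2_def by (rule summable_finite) auto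

lemma l2_basis: "l2 (basis m)"
  by (rule l2_finite_support[of "{m}"]) (auto simp: basis_def)

lemma l2_trunc: "l2 (trunc N u)"
  by (rule l2_finite_support[of "{..<N}"]) (auto simp: trunc_def)

lemma domG_l2: "domG u \<Longrightarrow> l2 u"
  by (simp add: domG_def)

lemma domG_basis: "domG (basis n)"
proof -
  have "summable (\<lambda>k. (real k)^4 * (cmod (basis n k))^2)"
    by (rule summable_finite[of "{n}"]) (auto simp: basis_def)
  then show ?thesis by (simp add: domG_def l2_basis)
qed

lemma summable_cmod_mult: assumes "l2 u" "l2 v" shows "summable (\<lambda>n. cmod (u n) * cmod (v n))"
proof (rule summable_comparison_test')
  show "summable (\<lambda>n. (cmod (u n))^2 + (cmod (v n))^2)"
    using assms unfolding l2_def by (rule summable_add)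
  show "norm (cmod (u n) * cmod (v n)) \<le> (cmod (u n))^2 + (cmod (v n))^2" for n
  proof -
    have "norm (cmod (u n) * cmod (v n)) = cmod (u n) * cmod (v n)" by simp
    moreover have "0 \<le> cmod (u n) * cmod (v n)" by simp
    ultimately show ?thesis using sum_squares_bound[of "cmod (u n)" "cmod (v n)"] by linarith
  qed
qed

lemma summable_norm_cnj_mult: "l2 u \<Longrightarrow> l2 v \<Longrightarrow> summable (\<lambda>n. norm (cnj (u n) * v n))"
  using summable_cmod_mult by (simp add: norm_mult)

lemma summable_cnj_mult: "l2 u \<Longrightarrow> l2 v \<Longrightarrow> summable (\<lambda>n. cnj (u n) * v n)"
  by (rule summable_norm_cancel[OF summable_norm_cnj_mult])

lemma inn_cauchy_schwarz:
  assumes "l2 u" "l2 v" shows "cmod (inn u v) \<le> sqrt (sqnorm u) * sqrt (sqnorm v)"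
proof -
  have "cmod (inn u v) \<le> (\<Sum>n. cmod (u n) * cmod (v n))"
    unfolding inn_def using summable_norm[OF summable_norm_cnj_mult[OF assms]] by (simp add: norm_mult)
  also have "\<dots> \<le> sqrt (sqnorm u) * sqrt (sqnorm v)"
  proof (rule suminf_le_const[OF summable_cmod_mult[OF assms]])
    fix N
    have "(\<Sum>n<N. cmod (u n) * cmod (v n))
        \<le> L2_set (\<lambda>n. cmod (u n)) {..<N} * L2_set (\<lambda>n. cmod (v n)) {..<N}"
      using L2_set_mult_ineq[of "\<lambda>n. cmod (u n)" "\<lambda>n. cmod (v n)" "{..<N}"] by simp
    also have "\<dots> \<le> sqrt (sqnorm u) * sqrt (sqnorm v)"
      using assms unfolding L2_set_def sqnorm_def l2_def
      by (intro mult_mono real_sqrt_le_mono sum_le_suminf) (auto intro!: suminf_nonneg sum_nonneg)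
    finally show "(\<Sum>n<N. cmod (u n) * cmod (v n)) \<le> sqrt (sqnorm u) * sqrt (sqnorm v)" .
  qed
  finally show ?thesis .
qed

lemma inn_add: "l2 w \<Longrightarrow> l2 u \<Longrightarrow> l2 v \<Longrightarrow> inn w (\<lambda>k. u k + v k) = inn w u + inn w v"
  unfolding inn_def by (simp add: distrib_left suminf_add summable_cnj_mult)

lemma inn_diff: "l2 w \<Longrightarrow> l2 u \<Longrightarrow> l2 v \<Longrightarrow> inn w (\<lambda>k. u k - v k) = inn w u - inn w v"
  unfolding inn_def by (simp add: right_diff_distrib suminf_diff summable_cnj_mult)

lemma inn_cmult: "l2 w \<Longrightarrow> l2 u \<Longrightarrow> inn w (\<lambda>k. c * u k) = c * inn w u"
  unfolding inn_def by (simp add: suminf_mult[symmetric] mult.left_commute summable_cnj_mult)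

lemma inn_sum:
  assumes "l2 w" "finite J" "\<And>j. j \<in> J \<Longrightarrow> l2 (f j)"
  shows "inn w (\<lambda>k. \<Sum>j\<in>J. c j * f j k) = (\<Sum>j\<in>J. c j * inn w (f j))"
proof -
  have "inn w (\<lambda>k. \<Sum>j\<in>J. c j * f j k) = (\<Sum>k. \<Sum>j\<in>J. c j * (cnj (w k) * f j k))"
    unfolding inn_def by (simp add: sum_distrib_left mult.left_commute)
  also have "\<dots> = (\<Sum>j\<in>J. \<Sum>k. c j * (cnj (w k) * f j k))"
    using assms by (intro suminf_sum summable_mult summable_cnj_mult) auto
  also have "\<dots> = (\<Sum>j\<in>J. c j * inn w (f j))"
    unfolding inn_def using assms by (intro sum.cong refl suminf_mult summable_cnj_mult) auto
  finally show ?thesis .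
qed

lemma inn_commute: assumes "l2 w" "l2 u" shows "inn u w = cnj (inn w u)"
  unfolding inn_def using summable_cnj_mult[OF assms]
  by (simp add: bounded_linear.suminf[OF bounded_linear_cnj] mult.commute)

lemma inn_finite_support:
  "finite S \<Longrightarrow> (\<And>k. k \<notin> S \<Longrightarrow> v k = 0) \<Longrightarrow> inn v u = (\<Sum>k\<in>S. cnj (v k) * u k)"
  unfolding inn_def by (rule suminf_finite) auto

lemma inn_basis_left: "inn (basis m) y = y m"
  using inn_finite_support[of "{m}" "basis m" y] by (simp add: basis_def)

lemma inn_trunc_right: "inn a (trunc N v) = (\<Sum>j<N. cnj (a j) * v j)"
  unfolding inn_def by (subst suminf_finite[of "{..<N}"]) (auto simp: trunc_def)

lemma cnj_mult_self: "cnj z * z = of_real ((cmod z)^2)"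
  by (metis complex_norm_square mult.commute of_real_power)

lemma cnj_mult_mult: "cnj (a * x) * (a * y) = (cnj a * a) * (cnj x * y)"
  by (simp add: mult_ac)

lemma inn_self: "l2 u \<Longrightarrow> inn u u = of_real (sqnorm u)"
  unfolding inn_def sqnorm_def l2_def by (simp only: cnj_mult_self suminf_of_real)

lemma sqnorm_trunc: "sqnorm (trunc N v) = (\<Sum>j<N. (cmod (v j))^2)"
  unfolding sqnorm_def by (subst suminf_finite[of "{..<N}"]) (auto simp: trunc_def)

lemma sqnorm_trunc_remainder_tendsto_0:
  assumes "l2 u" shows "(\<lambda>N. sqnorm (\<lambda>k. u k - trunc N u k)) \<longlonglongrightarrow> 0"
proof -
  define f where "f n = (cmod (u n))^2" for n
  have "summable f" using assms by (simp add: l2_def f_def[abs_def])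
  have "(\<lambda>n. (cmod (u n - trunc N u n))^2) sums (\<Sum>n. f (n + N))" for N
  proof -
    have "(\<lambda>i. f (i + N)) sums (\<Sum>n. f (n + N))"
      using \<open>summable f\<close> by (simp add: summable_ignore_initial_segment summable_sums)
    moreover have "(\<Sum>i<N. (cmod (u i - trunc N u i))^2) = 0"
      by (simp add: trunc_def)
    ultimately show ?thesis
      using sums_iff_shift[of "\<lambda>n. (cmod (u n - trunc N u n))^2" N] by (simp add: trunc_def f_def)
  qed
  then have "(\<lambda>N. sqnorm (\<lambda>k. u k - trunc N u k)) = (\<lambda>N. \<Sum>n. f (n + N))"
    unfolding sqnorm_def using sums_unique by (metis (no_types, lifting))
  also have "\<dots> \<longlonglongrightarrow> 0" using \<open>summable f\<close> by (rule suminf_exist_split2)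
  finally show ?thesis .
qed

lemma LIMSEQ_by_norm_bound:
  fixes f :: "nat \<Rightarrow> 'a::real_normed_vector"
  assumes "\<And>N. norm (f N - L) \<le> h N" "h \<longlonglongrightarrow> 0"
  shows "f \<longlonglongrightarrow> L"
  using Lim_null_comparison[OF _ assms(2), of "\<lambda>N. f N - L"] assms(1) by (simp add: LIM_zero_iff)


section \<open>Bounded operators and their adjoints\<close>

lemma bop_l2: "bop x \<Longrightarrow> l2 u \<Longrightarrow> l2 (x u)"
  by (simp add: bop_def)

lemma bop_add: "bop x \<Longrightarrow> l2 u \<Longrightarrow> l2 v \<Longrightarrow> x (\<lambda>k. u k + v k) = (\<lambda>k. x u k + x v k)"
  by (simp add: bop_def)

lemma bop_cmult: "bop x \<Longrightarrow> l2 u \<Longrightarrow> x (\<lambda>k. c * u k) = (\<lambda>k. c * x u k)"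
  by (simp add: bop_def)

lemma bop_boundE:
  assumes "bop x"
  obtains C where "0 \<le> C" "\<And>u. l2 u \<Longrightarrow> sqnorm (x u) \<le> C * sqnorm u"
proof -
  obtain C where C: "\<And>u. l2 u \<Longrightarrow> sqnorm (x u) \<le> C * sqnorm u"
    using assms unfolding bop_def sqnorm_def by blast
  have "sqnorm (x u) \<le> max C 0 * sqnorm u" if "l2 u" for u
    using C[OF that] mult_right_mono[OF max.cobounded1 sqnorm_nonneg[OF that], of C 0] by linarith
  with that[of "max C 0"] show ?thesis by simp
qed

lemma bop_diff: "bop x \<Longrightarrow> l2 u \<Longrightarrow> l2 v \<Longrightarrow> x (\<lambda>k. u k - v k) = (\<lambda>k. x u k - x v k)"
  using bop_add[of x u "\<lambda>k. (-1) * v k"] bop_cmult[of x v "-1"] l2_cmult[of v "-1"] by simp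

lemma bop_trunc: "bop x \<Longrightarrow> x (trunc N v) = (\<lambda>k. \<Sum>j<N. v j * x (basis j) k)"
proof (induction N)
  case 0
  have "trunc 0 v = (\<lambda>k. 0 * basis 0 k)" by (simp add: trunc_def)
  with 0 show ?case using bop_cmult[OF 0 l2_basis, of 0 0] by simp
next
  case (Suc N)
  have "trunc (Suc N) v = (\<lambda>k. trunc N v k + v N * basis N k)"
    by (auto simp: trunc_def basis_def fun_eq_iff less_Suc_eq)
  with Suc show ?case
    using bop_add[OF Suc.prems l2_trunc l2_cmult[OF l2_basis]] bop_cmult[OF Suc.prems l2_basis] by simp
qed

lemma bopI:
  assumes "\<And>u. l2 u \<Longrightarrow> l2 (x u)"
    and "\<And>u v. l2 u \<Longrightarrow> l2 v \<Longrightarrow> x (\<lambda>k. u k + v k) = (\<lambda>k. x u k + x v k)"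
    and "\<And>c u. l2 u \<Longrightarrow> x (\<lambda>k. c * u k) = (\<lambda>k. c * x u k)"
    and "\<And>u. l2 u \<Longrightarrow> sqnorm (x u) \<le> C * sqnorm u"
  shows "bop x"
  using assms unfolding bop_def sqnorm_def by blast

lemma bop_id: "bop (\<lambda>w. w)"
  by (rule bopI[of _ 1]) auto

lemma bop_cmult_op:
  assumes "bop y" shows "bop (\<lambda>w k. c * y w k)"
proof -
  obtain C where C: "\<And>u. l2 u \<Longrightarrow> sqnorm (y u) \<le> C * sqnorm u"
    using bop_boundE[OF assms] by metis
  show ?thesis
  proof (rule bopI)
    show "sqnorm (\<lambda>k. c * y u k) \<le> ((cmod c)^2 * C) * sqnorm u" if "l2 u" for u
      using sqnorm_cmult[OF bop_l2[OF assms that], of c] C[OF that]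
      by (simp add: mult.assoc mult_left_mono)
  qed (simp_all add: bop_l2[OF assms] l2_cmult bop_add[OF assms] bop_cmult[OF assms]
      distrib_left mult.left_commute)
qed

lemma bop_add_op:
  assumes "bop y" "bop z" shows "bop (\<lambda>w k. y w k + z w k)"
proof -
  obtain C D where C: "\<And>u. l2 u \<Longrightarrow> sqnorm (y u) \<le> C * sqnorm u"
    and D: "\<And>u. l2 u \<Longrightarrow> sqnorm (z u) \<le> D * sqnorm u"
    using bop_boundE[OF assms(1)] bop_boundE[OF assms(2)] by metis
  show ?thesis
  proof (rule bopI)
    show "sqnorm (\<lambda>k. y u k + z u k) \<le> (2 * C + 2 * D) * sqnorm u" if "l2 u" for u
      using sqnorm_add_le[OF bop_l2[OF assms(1) that] bop_l2[OF assms(2) that]] C[OF that] D[OF that]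
      by (simp add: algebra_simps)
  qed (simp_all add: bop_l2[OF assms(1)] bop_l2[OF assms(2)] l2_add bop_add[OF assms(1)]
      bop_add[OF assms(2)] bop_cmult[OF assms(1)] bop_cmult[OF assms(2)] algebra_simps)
qed

lemma opos_id: "opos (\<lambda>w. w)"
  unfolding opos_def using inn_self sqnorm_nonneg by auto

definition adjoint_op :: "op \<Rightarrow> op" where
  "adjoint_op x w = (\<lambda>j. inn (x (basis j)) w)"

lemma inn_adjoint_op_trunc:
  assumes "bop x" "l2 w"
  shows "inn (adjoint_op x w) (trunc N v) = inn w (x (trunc N v))"
proof -
  have "inn (adjoint_op x w) (trunc N v) = (\<Sum>j<N. v j * inn w (x (basis j)))"
    using inn_commute[OF bop_l2[OF assms(1) l2_basis] assms(2)]
    by (simp add: inn_trunc_right adjoint_op_def mult.commute)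
  also have "\<dots> = inn w (x (trunc N v))"
    using assms by (simp add: bop_trunc inn_sum bop_l2 l2_basis)
  finally show ?thesis .
qed

(* Testing the adjoint against its own truncation and applying Cauchy-Schwarz bounds its partial sums. *)
lemma adjoint_op_bound:
  assumes "bop x" "l2 w" "0 \<le> C" "\<And>u. l2 u \<Longrightarrow> sqnorm (x u) \<le> C * sqnorm u"
  shows "l2 (adjoint_op x w)" "sqnorm (adjoint_op x w) \<le> C * sqnorm w"
proof -
  define a where "a = adjoint_op x w"
  have partial: "(\<Sum>j<N. (cmod (a j))^2) \<le> C * sqnorm w" for N
  proof -
    define S where "S = (\<Sum>j<N. (cmod (a j))^2)"
    have "0 \<le> S" unfolding S_def by (simp add: sum_nonneg)
    have "of_real S = inn a (trunc N a)"
      by (simp add: S_def inn_trunc_right cnj_mult_self)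
    also have "\<dots> = inn w (x (trunc N a))"
      unfolding a_def by (rule inn_adjoint_op_trunc[OF assms(1,2)])
    finally have "S \<le> sqrt (sqnorm w) * sqrt (sqnorm (x (trunc N a)))"
      using inn_cauchy_schwarz[OF assms(2) bop_l2[OF assms(1) l2_trunc]] \<open>0 \<le> S\<close>
      by (metis abs_of_nonneg norm_of_real)
    also have "\<dots> \<le> sqrt (sqnorm w) * sqrt (C * S)"
      using assms(4)[OF l2_trunc, of N a]
      by (intro mult_left_mono real_sqrt_le_mono) (simp_all add: sqnorm_trunc S_def sqnorm_nonneg[OF assms(2)])
    finally have "S^2 \<le> (sqrt (sqnorm w * (C * S)))^2"
      using \<open>0 \<le> S\<close> by (simp add: real_sqrt_mult power_mono)
    then have "S * S \<le> (C * sqnorm w) * S"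
      using \<open>0 \<le> S\<close> assms(3) sqnorm_nonneg[OF assms(2)] by (simp add: power2_eq_square mult_ac)
    then show ?thesis
      using \<open>0 \<le> S\<close> assms(3) sqnorm_nonneg[OF assms(2)] unfolding S_def[symmetric]
      by (cases "S = 0") auto
  qed
  have summable: "summable (\<lambda>j. (cmod (a j))^2)"
    using partial by (intro summableI_nonneg_bounded) auto
  then show "l2 (adjoint_op x w)"
    unfolding a_def l2_def .
  show "sqnorm (adjoint_op x w) \<le> C * sqnorm w"
    using suminf_le_const[OF summable partial] by (simp add: a_def sqnorm_def)
qed

(* Both sides are continuous in v and agree on truncations of v. *)
lemma inn_adjoint_op:
  assumes x: "bop x" and w: "l2 w" and v: "l2 v"
  shows "inn (adjoint_op x w) v = inn w (x v)"
proof -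
  obtain C where C: "0 \<le> C" "\<And>u. l2 u \<Longrightarrow> sqnorm (x u) \<le> C * sqnorm u"
    using bop_boundE[OF x] by blast
  have a: "l2 (adjoint_op x w)" by (rule adjoint_op_bound(1)[OF x w C])
  define e where "e N = sqnorm (\<lambda>k. v k - trunc N v k)" for N
  have e: "e \<longlonglongrightarrow> 0" unfolding e_def by (rule sqnorm_trunc_remainder_tendsto_0[OF v])
  have rem: "l2 (\<lambda>k. v k - trunc N v k)" for N by (rule l2_diff[OF v l2_trunc])
  have "(\<lambda>N. inn w (x (trunc N v))) = (\<lambda>N. inn (adjoint_op x w) (trunc N v))"
    by (simp add: inn_adjoint_op_trunc[OF x w])
  also have "\<dots> \<longlonglongrightarrow> inn (adjoint_op x w) v"
  proof (rule LIMSEQ_by_norm_bound)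
    show "norm (inn (adjoint_op x w) (trunc N v) - inn (adjoint_op x w) v)
        \<le> sqrt (sqnorm (adjoint_op x w)) * sqrt (e N)" for N
      using inn_cauchy_schwarz[OF a rem[of N]] inn_diff[OF a v l2_trunc]
      by (simp add: e_def norm_minus_commute)
    show "(\<lambda>N. sqrt (sqnorm (adjoint_op x w)) * sqrt (e N)) \<longlonglongrightarrow> 0"
      using tendsto_mult_left[OF tendsto_real_sqrt[OF e]] by simp
  qed
  finally have "(\<lambda>N. inn w (x (trunc N v))) \<longlonglongrightarrow> inn (adjoint_op x w) v" .
  moreover have "(\<lambda>N. inn w (x (trunc N v))) \<longlonglongrightarrow> inn w (x v)"
  proof (rule LIMSEQ_by_norm_bound)
    fix N
    have "norm (inn w (x (trunc N v)) - inn w (x v)) \<le> sqrt (sqnorm w) * sqrt (sqnorm (x (\<lambda>k. v k - trunc N v k)))"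
      using inn_cauchy_schwarz[OF w bop_l2[OF x rem[of N]]] bop_diff[OF x v l2_trunc]
        inn_diff[OF w bop_l2[OF x v] bop_l2[OF x l2_trunc]] by (simp add: norm_minus_commute)
    also have "\<dots> \<le> sqrt (sqnorm w) * sqrt (C * e N)"
      unfolding e_def by (intro mult_left_mono real_sqrt_le_mono C(2) rem) (simp add: sqnorm_nonneg[OF w])
    finally show "norm (inn w (x (trunc N v)) - inn w (x v)) \<le> sqrt (sqnorm w) * sqrt (C * e N)" .
    show "(\<lambda>N. sqrt (sqnorm w) * sqrt (C * e N)) \<longlonglongrightarrow> 0"
      using tendsto_mult_left[OF tendsto_real_sqrt[OF tendsto_mult_left[OF e, of C]]] by simp
  qed
  ultimately show ?thesis
    by (rule LIMSEQ_unique)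
qed

lemma bop_adjoint_op: assumes "bop x" shows "bop (adjoint_op x)"
proof -
  obtain C where C: "0 \<le> C" "\<And>u. l2 u \<Longrightarrow> sqnorm (x u) \<le> C * sqnorm u"
    using bop_boundE[OF assms] by blast
  have "l2 (x (basis j))" for j by (rule bop_l2[OF assms l2_basis])
  then show ?thesis
    using adjoint_op_bound[OF assms _ C] by (intro bopI[where C=C]) (auto simp: adjoint_op_def inn_add inn_cmult)
qed

lemma inn_adjoint_op_self:
  assumes "bop x" "l2 u" shows "inn u (adjoint_op x u) = cnj (inn u (x u))"
  using inn_commute[OF bop_l2[OF bop_adjoint_op[OF assms(1)] assms(2)] assms(2)] inn_adjoint_op[OF assms assms(2)]
  by simp


section \<open>The semigroup and the jump operators\<close>

lemma omega_0 [simp]: "omega r 0 = 0"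
  by (simp add: omega_def)

lemma omega_nonneg: "0 < r \<Longrightarrow> 0 \<le> omega r k"
  unfolding omega_def by (cases k) auto

lemma omega_Suc_pos: "0 < r \<Longrightarrow> 0 < omega r (Suc k)"
  unfolding omega_def by (auto intro!: mult_pos_pos)

lemma omega_le_omega_Suc: "0 < r \<Longrightarrow> omega r k \<le> omega r (Suc k)"
  unfolding omega_def by (simp add: algebra_simps)

lemma omega_Suc_le: assumes "0 < r" shows "omega r (Suc k) \<le> 3 * (1 + r) * ((real k)^2 + 1)"
proof -
  have k: "2 * real k \<le> real k * real k + 1"
    using sum_squares_bound[of "real k" 1] by (simp add: power2_eq_square)
  moreover have "2 * (r * real k) \<le> r + r * (real k * real k)"
    using mult_left_mono[OF k, of r] assms by (simp add: algebra_simps)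
  moreover have "0 \<le> r * (real k * real k)" using assms by simp
  moreover have "omega r (Suc k) = real k * real k + real k + r * real k + r"
    by (simp add: omega_def algebra_simps)
  moreover have "3 * (1 + r) * ((real k)^2 + 1)
      = 3 + 3 * r + 3 * (real k * real k) + 3 * (r * (real k * real k))"
    by (simp add: algebra_simps power2_eq_square)
  ultimately show ?thesis using assms by linarith
qed

definition exit_rate :: "real \<Rightarrow> real \<Rightarrow> real \<Rightarrow> nat \<Rightarrow> real" where
  "exit_rate r lam mu k = lam^2 * omega r (Suc k) + mu^2 * omega r k"

lemma exit_rate_pos: "0 < r \<Longrightarrow> 0 < lam \<Longrightarrow> 0 < exit_rate r lam mu k"
  unfolding exit_rate_def using omega_Suc_pos[of r k] omega_nonneg[of r k]
  by (intro add_pos_nonneg mult_pos_pos) auto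

lemma cnj_exp_gdiag_mult:
  "cnj (exp (of_real s * gdiag r lam mu zp zm k)) * exp (of_real s * gdiag r lam mu zp zm k)
     = of_real (exp (- s * exit_rate r lam mu k))"
proof -
  have "Re (of_real s * gdiag r lam mu zp zm k) = - s * exit_rate r lam mu k / 2"
    by (simp add: gdiag_def exit_rate_def algebra_simps)
  then show ?thesis
    by (simp add: cnj_mult_self norm_exp_eq_Re power2_eq_square exp_add[symmetric])
qed

lemma cmod_exp_gdiag_power2:
  "(cmod (exp (of_real s * gdiag r lam mu zp zm k)))^2 = exp (- s * exit_rate r lam mu k)"
  using cnj_exp_gdiag_mult[of s r lam mu zp zm k] unfolding cnj_mult_self of_real_eq_iff .

(* No summability hypothesis: both sides are THE of the same sums predicate. *)
lemma suminf_Suc_eq: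
  fixes f :: "nat \<Rightarrow> 'a::real_normed_vector"
  assumes "f 0 = 0" shows "(\<Sum>n. f (Suc n)) = suminf f"
proof -
  have "(sums) (\<lambda>n. f (Suc n)) = (sums) f"
    using assms by (simp add: fun_eq_iff sums_Suc_iff)
  then show ?thesis by (simp add: suminf_def)
qed

lemma inn_Psg:
  "inn (Psg r lam mu zp zm \<tau> v) (Psg r lam mu zp zm \<tau> u)
     = (\<Sum>k. of_real (exp (- \<tau> * exit_rate r lam mu k)) * (cnj (v k) * u k))"
  unfolding inn_def Psg_def cnj_mult_mult cnj_exp_gdiag_mult ..

lemma inn_L1_Psg:
  assumes "0 < r"
  shows "inn (L1 r mu (Psg r lam mu zp zm \<tau> v)) (L1 r mu (Psg r lam mu zp zm \<tau> u))
     = (\<Sum>k. of_real (mu^2 * omega r k * exp (- \<tau> * exit_rate r lam mu k)) * (cnj (v k) * u k))"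
    (is "_ = suminf ?f")
proof -
  have "suminf ?f = (\<Sum>k. ?f (Suc k))"
    by (rule suminf_Suc_eq[symmetric]) simp
  also have "\<dots> = inn (L1 r mu (Psg r lam mu zp zm \<tau> v)) (L1 r mu (Psg r lam mu zp zm \<tau> u))"
    unfolding inn_def L1_def Bop_def Psg_def cnj_mult_mult cnj_exp_gdiag_mult
    unfolding cnj_mult_self by (simp add: omega_nonneg[OF assms] mult_ac)
  finally show ?thesis ..
qed

lemma inn_L2_Psg:
  assumes "0 < r"
  shows "inn (L2 r lam (Psg r lam mu zp zm \<tau> v)) (L2 r lam (Psg r lam mu zp zm \<tau> u))
     = (\<Sum>k. of_real (lam^2 * omega r (Suc k) * exp (- \<tau> * exit_rate r lam mu k)) * (cnj (v k) * u k))"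
  unfolding inn_def L2_def Bplus_def Psg_def
  by (subst suminf_Suc_eq[symmetric])
    (simp_all only: if_True if_False nat.distinct diff_Suc_1 cnj_mult_mult cnj_exp_gdiag_mult,
      simp_all only: cnj_mult_self, simp_all add: omega_nonneg[OF assms] mult_ac)

lemma Psg_basis:
  "Psg r lam mu zp zm \<tau> (basis n) = (\<lambda>k. exp (of_real \<tau> * gdiag r lam mu zp zm n) * basis n k)"
  by (auto simp: Psg_def basis_def)

lemma L1_Psg_basis:
  "L1 r mu (Psg r lam mu zp zm \<tau> (basis n))
     = (\<lambda>k. (of_real mu * of_real (sqrt (omega r n)) * exp (of_real \<tau> * gdiag r lam mu zp zm n)) * basis (n - 1) k)"
  by (cases n) (auto simp: L1_def Bop_def Psg_def basis_def)

lemma L2_Psg_basis: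
  "L2 r lam (Psg r lam mu zp zm \<tau> (basis n))
     = (\<lambda>k. (of_real lam * of_real (sqrt (omega r (Suc n))) * exp (of_real \<tau> * gdiag r lam mu zp zm n)) * basis (Suc n) k)"
  by (auto simp: L2_def Bplus_def Psg_def basis_def fun_eq_iff)

lemma inn_cmult_basis_bop:
  assumes "bop y"
  shows "inn (\<lambda>k. a * basis m k) (y (\<lambda>k. a * basis m k)) = of_real ((cmod a)^2) * y (basis m) m"
proof -
  have "inn (\<lambda>k. a * basis m k) (y (\<lambda>k. a * basis m k)) = cnj a * (a * y (basis m) m)"
    using inn_finite_support[of "{m}" "\<lambda>k. a * basis m k"] bop_cmult[OF assms l2_basis]
    by (simp add: basis_def)
  then show ?thesis by (simp only: mult.assoc[symmetric] cnj_mult_self)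
qed

lemma inn_Psg_basis_bop:
  assumes "bop y"
  shows "inn (Psg r lam mu zp zm \<tau> (basis n)) (y (Psg r lam mu zp zm \<tau> (basis n)))
      = of_real (exp (- \<tau> * exit_rate r lam mu n)) * y (basis n) n"
  unfolding Psg_basis inn_cmult_basis_bop[OF assms] cmod_exp_gdiag_power2 ..

lemma inn_L1_Psg_basis_bop:
  assumes "0 < r" "bop y"
  shows "inn (L1 r mu (Psg r lam mu zp zm \<tau> (basis n))) (y (L1 r mu (Psg r lam mu zp zm \<tau> (basis n))))
      = of_real (mu^2 * omega r n * exp (- \<tau> * exit_rate r lam mu n)) * y (basis (n - 1)) (n - 1)"
  unfolding L1_Psg_basis inn_cmult_basis_bop[OF assms(2)] norm_mult power_mult_distrib cmod_exp_gdiag_power2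
  by (simp add: omega_nonneg[OF assms(1)])

lemma inn_L2_Psg_basis_bop:
  assumes "0 < r" "bop y"
  shows "inn (L2 r lam (Psg r lam mu zp zm \<tau> (basis n))) (y (L2 r lam (Psg r lam mu zp zm \<tau> (basis n))))
      = of_real (lam^2 * omega r (Suc n) * exp (- \<tau> * exit_rate r lam mu n)) * y (basis (Suc n)) (Suc n)"
  unfolding L2_Psg_basis inn_cmult_basis_bop[OF assms(2)] norm_mult power_mult_distrib cmod_exp_gdiag_power2
  by (simp add: omega_nonneg[OF assms(1)])


section \<open>The identity solves the integral equation\<close>

lemma has_integral_suminf_dominated:
  fixes F :: "nat \<Rightarrow> real \<Rightarrow> 'a::banach"
  assumes "\<And>k s. s \<in> {a..b} \<Longrightarrow> norm (F k s) \<le> M k" "summable M"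
    and "\<And>k. continuous_on {a..b} (F k)" "\<And>k. (F k has_integral I k) {a..b}"
  shows "((\<lambda>s. \<Sum>k. F k s) has_integral (\<Sum>k. I k)) {a..b}" "summable I"
proof -
  have "uniform_limit {a..b} (\<lambda>n s. \<Sum>k<n. F k s) (\<lambda>s. \<Sum>k. F k s) sequentially"
    by (rule Weierstrass_m_test[OF assms(1,2)])
  moreover have "continuous_on {a..b} (\<lambda>s. \<Sum>k<n. F k s)" for n
    by (intro continuous_on_sum assms(3))
  ultimately obtain Ip J where Ip: "\<And>n. ((\<lambda>s. \<Sum>k<n. F k s) has_integral Ip n) {a..b}"
    and J: "((\<lambda>s. \<Sum>k. F k s) has_integral J) {a..b}" and "Ip \<longlonglongrightarrow> J"
    by (rule uniform_limit_integral) auto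
  moreover have "Ip = (\<lambda>n. \<Sum>k<n. I k)"
    by (rule ext, rule has_integral_unique[OF Ip has_integral_sum[OF finite_lessThan assms(4)]])
  ultimately have "I sums J" by (simp add: sums_def)
  then show "summable I" "((\<lambda>s. \<Sum>k. F k s) has_integral (\<Sum>k. I k)) {a..b}"
    using J by (auto simp: sums_iff)
qed

lemma has_integral_exp_decay:
  fixes A t :: real
  assumes "0 < A" "0 \<le> t"
  shows "((\<lambda>s. exp (- (t - s) * A)) has_integral (1 - exp (- t * A)) / A) {0..t}"
proof -
  have "((\<lambda>s. exp (- (t - s) * A) / A) has_vector_derivative exp (- (t - s) * A)) (at s within {0..t})" for s
    using assms(1) by (auto intro!: derivative_eq_intros simp: has_real_derivative_iff_has_vector_derivative[symmetric])
  then have "((\<lambda>s. exp (- (t - s) * A)) has_integral (exp (- (t - t) * A) / A - exp (- (t - 0) * A) / A)) {0..t}"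
    using assms(2) by (intro fundamental_theorem_of_calculus) auto
  then show ?thesis by (simp add: diff_divide_distrib)
qed

lemma exp_decay_partition:
  fixes b c t :: real
  assumes "b + c \<noteq> 0"
  shows "exp (- t * (b + c)) + b * ((1 - exp (- t * (b + c))) / (b + c)) + c * ((1 - exp (- t * (b + c))) / (b + c)) = 1"
proof -
  have "b * ((1 - exp (- t * (b + c))) / (b + c)) + c * ((1 - exp (- t * (b + c))) / (b + c))
      = (b + c) * (1 - exp (- t * (b + c))) / (b + c)"
    by (simp add: distrib_right add_divide_distrib)
  also have "\<dots> = 1 - exp (- t * (b + c))"
    using assms by simp
  finally show ?thesis by simp
qed

lemma has_integral_exp_decay_series:
  fixes c A :: "nat \<Rightarrow> real" and z :: "nat \<Rightarrow> complex"
  assumes A: "\<And>k. 0 < A k" and t: "0 \<le> t" and summable: "summable (\<lambda>k. \<bar>c k\<bar> * cmod (z k))"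
  defines "I \<equiv> \<lambda>k. of_real (c k * ((1 - exp (- t * A k)) / A k)) * z k"
  shows "((\<lambda>s. \<Sum>k. of_real (c k * exp (- (t - s) * A k)) * z k) has_integral suminf I) {0..t}"
    and "summable I"
proof -
  have bound: "norm (of_real (c k * exp (- (t - s) * A k)) * z k) \<le> \<bar>c k\<bar> * cmod (z k)"
    if "s \<in> {0..t}" for k s
  proof -
    have "exp (- (t - s) * A k) \<le> 1"
      using that A[of k] by (simp add: mult_nonpos_nonneg)
    then show ?thesis
      by (simp add: norm_mult abs_mult mult_right_mono mult_left_le)
  qed
  have integral: "((\<lambda>s. of_real (c k * exp (- (t - s) * A k)) * z k) has_integral I k) {0..t}" for k
  proof -
    have "((\<lambda>s. c k * exp (- (t - s) * A k)) has_integral c k * ((1 - exp (- t * A k)) / A k)) {0..t}"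
      by (rule has_integral_mult_right[OF has_integral_exp_decay[OF A t]])
    from has_integral_scaleR_left[OF this, of "z k"] show ?thesis
      by (simp add: I_def scaleR_conv_of_real)
  qed
  have "continuous_on {0..t} (\<lambda>s. of_real (c k * exp (- (t - s) * A k)) * z k)" for k
    by (intro continuous_intros)
  with has_integral_suminf_dominated[OF bound summable _ integral]
  show "((\<lambda>s. \<Sum>k. of_real (c k * exp (- (t - s) * A k)) * z k) has_integral suminf I) {0..t}"
    and "summable I" by auto
qed

lemma summable_poly_weight_cnj_mult:
  assumes u: "domG u" and v: "l2 v"
  shows "summable (\<lambda>k. ((real k)^2 + 1) * cmod (cnj (v k) * u k))"
proof (rule summable_comparison_test')
  have "l2 u" "summable (\<lambda>k. (real k)^4 * (cmod (u k))^2)" using u by (auto simp: domG_def)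
  with v show "summable (\<lambda>k. (cmod (v k))^2 + (2 * ((real k)^4 * (cmod (u k))^2) + 2 * (cmod (u k))^2))"
    unfolding l2_def by (intro summable_add summable_mult)
next
  fix k
  define a where "a = cmod (v k)"
  define b where "b = ((real k)^2 + 1) * cmod (u k)"
  have "((real k)^2 + 1)^2 \<le> 2 * (real k)^4 + 2"
    using sum_squares_bound[of "(real k)^2" 1] by (simp add: power2_eq_square power4_eq_xxxx algebra_simps)
  then have "b^2 \<le> (2 * (real k)^4 + 2) * (cmod (u k))^2"
    unfolding b_def power_mult_distrib by (rule mult_right_mono) simp
  then have "b^2 \<le> 2 * ((real k)^4 * (cmod (u k))^2) + 2 * (cmod (u k))^2"
    by (simp add: algebra_simps)
  moreover have "norm (((real k)^2 + 1) * cmod (cnj (v k) * u k)) = a * b"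
    by (simp add: a_def b_def norm_mult abs_mult)
  moreover have "2 * a * b \<le> a^2 + b^2" by (rule sum_squares_bound)
  moreover have "0 \<le> a * b" by (simp add: a_def b_def)
  ultimately show "norm (((real k)^2 + 1) * cmod (cnj (v k) * u k))
      \<le> (cmod (v k))^2 + (2 * ((real k)^4 * (cmod (u k))^2) + 2 * (cmod (u k))^2)"
    unfolding a_def[symmetric] by linarith
qed

lemma summable_omega_Suc_cnj_mult:
  assumes "0 < r" "domG u" "l2 v"
  shows "summable (\<lambda>k. omega r (Suc k) * cmod (cnj (v k) * u k))"
proof (rule summable_comparison_test')
  show "summable (\<lambda>k. 3 * (1 + r) * (((real k)^2 + 1) * cmod (cnj (v k) * u k)))"
    by (intro summable_mult summable_poly_weight_cnj_mult assms(2,3))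
  show "norm (omega r (Suc k) * cmod (cnj (v k) * u k))
      \<le> 3 * (1 + r) * (((real k)^2 + 1) * cmod (cnj (v k) * u k))" for k
    using omega_Suc_le[OF assms(1), of k] omega_nonneg[OF assms(1), of "Suc k"]
    by (simp add: abs_mult mult.assoc[symmetric] mult_right_mono)
qed

lemma has_integral_inn_L1_Psg:
  fixes r lam mu zp zm t :: real
  assumes r: "0 < r" and lam: "0 < lam" and t: "0 \<le> t" and u: "domG u" and v: "l2 v"
  defines "J \<equiv> \<lambda>k. of_real (mu^2 * omega r k * ((1 - exp (- t * exit_rate r lam mu k)) / exit_rate r lam mu k))
      * (cnj (v k) * u k)"
  shows "((\<lambda>s. inn (L1 r mu (Psg r lam mu zp zm (t - s) v)) (L1 r mu (Psg r lam mu zp zm (t - s) u)))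
      has_integral suminf J) {0..t}"
    and "summable J"
proof -
  have "summable (\<lambda>k. \<bar>mu^2 * omega r k\<bar> * cmod (cnj (v k) * u k))"
  proof (rule summable_comparison_test')
    show "summable (\<lambda>k. mu^2 * (omega r (Suc k) * cmod (cnj (v k) * u k)))"
      by (intro summable_mult summable_omega_Suc_cnj_mult r u v)
    show "norm (\<bar>mu^2 * omega r k\<bar> * cmod (cnj (v k) * u k)) \<le> mu^2 * (omega r (Suc k) * cmod (cnj (v k) * u k))"
      for k
      using mult_right_mono[OF omega_le_omega_Suc[OF r, of k] norm_ge_zero[of "cnj (v k) * u k"]]
        omega_nonneg[OF r, of k]
      by (simp add: abs_mult mult.assoc mult_left_mono)
  qed
  from has_integral_exp_decay_series[of "exit_rate r lam mu" t "\<lambda>k. mu^2 * omega r k" "\<lambda>k. cnj (v k) * u k",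
      OF exit_rate_pos[OF r lam] t this]
  show "((\<lambda>s. inn (L1 r mu (Psg r lam mu zp zm (t - s) v)) (L1 r mu (Psg r lam mu zp zm (t - s) u)))
      has_integral suminf J) {0..t}" and "summable J"
    unfolding inn_L1_Psg[OF r] J_def .
qed

lemma has_integral_inn_L2_Psg:
  fixes r lam mu zp zm t :: real
  assumes r: "0 < r" and lam: "0 < lam" and t: "0 \<le> t" and u: "domG u" and v: "l2 v"
  defines "J \<equiv> \<lambda>k. of_real (lam^2 * omega r (Suc k) * ((1 - exp (- t * exit_rate r lam mu k)) / exit_rate r lam mu k))
      * (cnj (v k) * u k)"
  shows "((\<lambda>s. inn (L2 r lam (Psg r lam mu zp zm (t - s) v)) (L2 r lam (Psg r lam mu zp zm (t - s) u)))
      has_integral suminf J) {0..t}"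
    and "summable J"
proof -
  have "summable (\<lambda>k. \<bar>lam^2 * omega r (Suc k)\<bar> * cmod (cnj (v k) * u k))"
    using summable_mult[OF summable_omega_Suc_cnj_mult[OF r u v], of "lam^2"] omega_nonneg[OF r]
    by (simp add: abs_mult mult.assoc)
  from has_integral_exp_decay_series[of "exit_rate r lam mu" t "\<lambda>k. lam^2 * omega r (Suc k)" "\<lambda>k. cnj (v k) * u k",
      OF exit_rate_pos[OF r lam] t this]
  show "((\<lambda>s. inn (L2 r lam (Psg r lam mu zp zm (t - s) v)) (L2 r lam (Psg r lam mu zp zm (t - s) u)))
      has_integral suminf J) {0..t}" and "summable J"
    unfolding inn_L2_Psg[OF r] J_def .
qed

lemma identity_solves_integral_equation:
  fixes r lam mu zp zm t :: real
  assumes r: "0 < r" and lam: "0 < lam" and t: "0 \<le> t" and u: "domG u" and v: "l2 v"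
  defines "F1 \<equiv> \<lambda>s. inn (L1 r mu (Psg r lam mu zp zm (t - s) v)) (L1 r mu (Psg r lam mu zp zm (t - s) u))"
    and "F2 \<equiv> \<lambda>s. inn (L2 r lam (Psg r lam mu zp zm (t - s) v)) (L2 r lam (Psg r lam mu zp zm (t - s) u))"
  shows "F1 integrable_on {0..t}" "F2 integrable_on {0..t}"
    "inn v u = inn (Psg r lam mu zp zm t v) (Psg r lam mu zp zm t u) + integral {0..t} F1 + integral {0..t} F2"
proof -
  define A where "A = exit_rate r lam mu"
  define q where "q k = cnj (v k) * u k" for k
  define J1 where "J1 = (\<lambda>k. of_real (mu^2 * omega r k * ((1 - exp (- t * A k)) / A k)) * q k)"
  define J2 where "J2 = (\<lambda>k. of_real (lam^2 * omega r (Suc k) * ((1 - exp (- t * A k)) / A k)) * q k)"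
  have I1: "(F1 has_integral suminf J1) {0..t}" "summable J1"
    unfolding F1_def J1_def A_def q_def by (fact has_integral_inn_L1_Psg[OF r lam t u v])+
  have I2: "(F2 has_integral suminf J2) {0..t}" "summable J2"
    unfolding F2_def J2_def A_def q_def by (fact has_integral_inn_L2_Psg[OF r lam t u v])+
  then show "F1 integrable_on {0..t}" "F2 integrable_on {0..t}"
    using I1 by auto
  have A: "0 < A k" for k
    unfolding A_def by (rule exit_rate_pos[OF r lam])
  have E: "summable (\<lambda>k. of_real (exp (- t * A k)) * q k)"
  proof (rule summable_comparison_test')
    show "summable (\<lambda>k. cmod (q k))"
      unfolding q_def by (rule summable_norm_cnj_mult[OF v domG_l2[OF u]])
    show "norm (of_real (exp (- t * A k)) * q k) \<le> cmod (q k)" for k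
      using t A[of k] by (simp add: norm_mult mult_left_le_one_le mult_nonneg_nonneg)
  qed
  have "q k = of_real (exp (- t * A k)) * q k + J1 k + J2 k" for k
  proof -
    have "exp (- t * A k) + mu^2 * omega r k * ((1 - exp (- t * A k)) / A k)
        + lam^2 * omega r (Suc k) * ((1 - exp (- t * A k)) / A k) = 1"
      using exp_decay_partition[of "mu^2 * omega r k" "lam^2 * omega r (Suc k)" t] A[of k]
      by (simp add: A_def exit_rate_def add.commute)
    then show ?thesis
      unfolding J1_def J2_def by (metis (no_types) distrib_right mult_1 of_real_1 of_real_add)
  qed
  then have "inn v u = (\<Sum>k. of_real (exp (- t * A k)) * q k + J1 k + J2 k)"
    by (simp add: inn_def q_def)
  also have "\<dots> = (\<Sum>k. of_real (exp (- t * A k)) * q k) + suminf J1 + suminf J2"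
    using E I1(2) I2(2) by (simp add: suminf_add summable_add)
  finally show "inn v u = inn (Psg r lam mu zp zm t v) (Psg r lam mu zp zm t u) + integral {0..t} F1 + integral {0..t} F2"
    using I1(1) I2(1) by (simp add: inn_Psg integral_unique A_def q_def)
qed


section \<open>The diagonal master equation\<close>

lemma qds_solution_bop:
  "qds_solution r lam mu zp zm T \<Longrightarrow> 0 \<le> t \<Longrightarrow> bop x \<Longrightarrow> bop (T t x)"
  by (simp add: qds_solution_def)

lemma qds_solution_opos:
  "qds_solution r lam mu zp zm T \<Longrightarrow> 0 \<le> t \<Longrightarrow> bop x \<Longrightarrow> opos x \<Longrightarrow> opos (T t x)"
  by (simp add: qds_solution_def)

lemma qds_solution_equation:
  fixes r lam mu zp zm t :: real
  assumes "qds_solution r lam mu zp zm T" "0 \<le> t" "bop x" "domG u" "domG v"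
  defines "F1 \<equiv> \<lambda>s. inn (L1 r mu (Psg r lam mu zp zm (t - s) v)) (T s x (L1 r mu (Psg r lam mu zp zm (t - s) u)))"
    and "F2 \<equiv> \<lambda>s. inn (L2 r lam (Psg r lam mu zp zm (t - s) v)) (T s x (L2 r lam (Psg r lam mu zp zm (t - s) u)))"
  shows "F1 integrable_on {0..t}" "F2 integrable_on {0..t}"
    "inn v (T t x u) = inn (Psg r lam mu zp zm t v) (x (Psg r lam mu zp zm t u)) + integral {0..t} F1 + integral {0..t} F2"
  using assms(1) unfolding F1_def F2_def qds_solution_def by (simp_all add: assms(2-5))

definition diag_entry :: "(real \<Rightarrow> op \<Rightarrow> op) \<Rightarrow> op \<Rightarrow> nat \<Rightarrow> real \<Rightarrow> complex" where
  "diag_entry T x n s = T s x (basis n) n"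

lemma mild_solution_has_vector_derivative:
  fixes d :: "nat \<Rightarrow> real \<Rightarrow> complex" and X :: "nat \<Rightarrow> complex" and A b c :: "nat \<Rightarrow> real"
  defines "g \<equiv> \<lambda>n s. of_real (exp (s * A n)) * (of_real (b n) * d (n - 1) s + of_real (c n) * d (Suc n) s)"
  assumes integrable: "\<And>n. g n integrable_on {0..t0}"
    and mild: "\<And>n t. t \<in> {0..t0} \<Longrightarrow> d n t = of_real (exp (- t * A n)) * (X n + integral {0..t} (g n))"
    and t: "t \<in> {0..t0}"
  shows "(d n has_vector_derivative
      of_real (- A n) * d n t + of_real (b n) * d (n - 1) t + of_real (c n) * d (Suc n) t) (at t within {0..t0})"
proof -
  define R where "R n t = of_real (exp (- t * A n)) * (X n + integral {0..t} (g n))" for n t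
  have "continuous_on {0..t0} (R n)" for n
    unfolding R_def by (intro continuous_intros indefinite_integral_continuous_1 integrable)
  then have "continuous_on {0..t0} (d n)" for n
    using mild by (metis R_def continuous_on_cong)
  then have "continuous_on {0..t0} (g n)" for n
    unfolding g_def by (intro continuous_intros)
  then have "((\<lambda>t. X n + integral {0..t} (g n)) has_vector_derivative g n t) (at t within {0..t0})"
    using integral_has_vector_derivative[OF _ t] by (auto intro!: derivative_eq_intros)
  then have "(R n has_vector_derivative
      of_real (exp (- t * A n)) * g n t + of_real (- A n * exp (- t * A n)) * (X n + integral {0..t} (g n)))
      (at t within {0..t0})"
    unfolding R_def
    by (intro has_vector_derivative_mult has_vector_derivative_of_real) (auto intro!: derivative_eq_intros)
  also have "of_real (exp (- t * A n)) * g n t = of_real (b n) * d (n - 1) t + of_real (c n) * d (Suc n) t"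
    unfolding g_def mult.assoc[symmetric] of_real_mult[symmetric] exp_add[symmetric] by simp
  also have "of_real (- A n * exp (- t * A n)) * (X n + integral {0..t} (g n)) = of_real (- A n) * d n t"
    using mild[OF t, of n] by (simp only: of_real_mult mult.assoc)
  finally have "(d n has_vector_derivative
      of_real (b n) * d (n - 1) t + of_real (c n) * d (Suc n) t + of_real (- A n) * d n t) (at t within {0..t0})"
    by (rule has_vector_derivative_transform[OF t, rotated]) (simp add: R_def mild)
  then show ?thesis
    by (simp only: add_ac)
qed

lemma diag_entry_integral_equation:
  fixes r lam mu zp zm t :: real and n :: nat
  assumes r: "0 < r" and T: "qds_solution r lam mu zp zm T" and x: "bop x" and t: "0 \<le> t"
  defines "g \<equiv> \<lambda>s. of_real (exp (s * exit_rate r lam mu n)) *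
      (of_real (mu^2 * omega r n) * diag_entry T x (n - 1) s
       + of_real (lam^2 * omega r (Suc n)) * diag_entry T x (Suc n) s)"
  shows "g integrable_on {0..t}"
    and "diag_entry T x n t = of_real (exp (- t * exit_rate r lam mu n)) * (x (basis n) n + integral {0..t} g)"
proof -
  let ?P = "Psg r lam mu zp zm"
  define F1 where "F1 s = inn (L1 r mu (?P (t - s) (basis n))) (T s x (L1 r mu (?P (t - s) (basis n))))" for s
  define F2 where "F2 s = inn (L2 r lam (?P (t - s) (basis n))) (T s x (L2 r lam (?P (t - s) (basis n))))" for s
  define c where "c = (of_real (exp (- t * exit_rate r lam mu n)) :: complex)"
  note equation = qds_solution_equation[OF T t x domG_basis domG_basis, of n n, folded F1_def F2_def]
  then have F1: "F1 integrable_on {0..t}" and F2: "F2 integrable_on {0..t}"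
    and eq: "diag_entry T x n t = c * x (basis n) n + integral {0..t} F1 + integral {0..t} F2"
    by (simp_all add: diag_entry_def inn_basis_left inn_Psg_basis_bop[OF x] c_def)
  have F12: "F1 s + F2 s = c * g s" if "s \<in> {0..t}" for s
  proof -
    have "bop (T s x)" using qds_solution_bop[OF T _ x] that by simp
    moreover have "exp (- (t - s) * exit_rate r lam mu n) = exp (- t * exit_rate r lam mu n) * exp (s * exit_rate r lam mu n)"
      by (simp add: exp_add[symmetric] algebra_simps)
    ultimately show ?thesis
      by (simp add: F1_def F2_def g_def c_def diag_entry_def inn_L1_Psg_basis_bop[OF r] inn_L2_Psg_basis_bop[OF r]
          algebra_simps)
  qed
  have "c \<noteq> 0" by (simp add: c_def)
  have "(\<lambda>s. F1 s + F2 s) integrable_on {0..t} \<longleftrightarrow> (\<lambda>s. c * g s) integrable_on {0..t}"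
    by (rule integrable_cong) (rule F12)
  then show "g integrable_on {0..t}"
    using integrable_add[OF F1 F2] integrable_on_mult_right_iff[OF \<open>c \<noteq> 0\<close>] by blast
  have "integral {0..t} F1 + integral {0..t} F2 = integral {0..t} (\<lambda>s. c * g s)"
    unfolding integral_add[OF F1 F2, symmetric] by (rule integral_cong) (rule F12)
  with eq show "diag_entry T x n t = c * (x (basis n) n + integral {0..t} g)"
    by (simp add: distrib_left add.assoc)
qed

lemma diag_entry_0:
  assumes "0 < r" "qds_solution r lam mu zp zm T" "bop x"
  shows "diag_entry T x n 0 = x (basis n) n"
  using diag_entry_integral_equation(2)[OF assms, of 0] by simp

lemma diag_entry_has_vector_derivative:
  assumes r: "0 < r" and T: "qds_solution r lam mu zp zm T" and x: "bop x" and s: "s \<in> {0..t}"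
  shows "(diag_entry T x n has_vector_derivative
      of_real (- exit_rate r lam mu n) * diag_entry T x n s
      + of_real (mu^2 * omega r n) * diag_entry T x (n - 1) s
      + of_real (lam^2 * omega r (Suc n)) * diag_entry T x (Suc n) s) (at s within {0..t})"
  using s diag_entry_integral_equation[OF r T x]
  by (intro mild_solution_has_vector_derivative[where X = "\<lambda>n. x (basis n) n"]) auto


section \<open>A uniform bound from minimality\<close>

lemma minimal_qdsD:
  assumes "minimal_qds r lam mu zp zm T"
  shows "qds_solution r lam mu zp zm T"
    and "0 \<le> s \<Longrightarrow> bop x \<Longrightarrow> bop y \<Longrightarrow> l2 u \<Longrightarrow> T s (\<lambda>w k. x w k + y w k) u = (\<lambda>k. T s x u k + T s y u k)"
    and "0 \<le> s \<Longrightarrow> bop x \<Longrightarrow> l2 u \<Longrightarrow> T s (\<lambda>w k. c * x w k) u = (\<lambda>k. c * T s x u k)"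
    and "qds_solution r lam mu zp zm T' \<Longrightarrow> 0 \<le> s \<Longrightarrow> bop x \<Longrightarrow> opos x \<Longrightarrow> ople (T s x) (T' s x)"
  using assms unfolding minimal_qds_def by blast+

lemma diag_entry_opos:
  assumes "qds_solution r lam mu zp zm T" "0 \<le> s" "bop y" "opos y"
  shows "Im (diag_entry T y n s) = 0" "0 \<le> Re (diag_entry T y n s)"
  using qds_solution_opos[OF assms] l2_basis[of n]
  unfolding opos_def diag_entry_def by (auto simp: inn_basis_left)

lemma qds_solution_override_id:
  assumes r: "0 < r" and lam: "0 < lam" and T: "qds_solution r lam mu zp zm T"
  shows "qds_solution r lam mu zp zm (\<lambda>s y. if y = (\<lambda>w. w) then (\<lambda>w. w) else T s y)"
  using T identity_solves_integral_equation[OF r lam _ _ domG_l2, where mu = mu and zp = zp and zm = zm]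
    bop_id opos_id
  unfolding qds_solution_def by auto

lemma diag_entry_id_le_1:
  assumes r: "0 < r" and lam: "0 < lam" and T: "minimal_qds r lam mu zp zm T" and s: "0 \<le> s"
  shows "Re (diag_entry T (\<lambda>w. w) n s) \<le> 1"
proof -
  have "ople (T s (\<lambda>w. w)) (\<lambda>w. w)"
    using minimal_qdsD(4)[OF T qds_solution_override_id[OF r lam minimal_qdsD(1)[OF T]] s bop_id opos_id]
    by simp
  then have "0 \<le> Re (inn (basis n) (\<lambda>k. basis n k - T s (\<lambda>w. w) (basis n) k))"
    unfolding ople_def opos_def using l2_basis by blast
  then show ?thesis
    unfolding inn_basis_left by (simp add: basis_def diag_entry_def)
qed

lemma opos_shift_selfadjoint:
  assumes y: "bop y" and sa: "\<And>u. l2 u \<Longrightarrow> Im (inn u (y u)) = 0"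
    and C: "0 \<le> C" "\<And>u. l2 u \<Longrightarrow> sqnorm (y u) \<le> C * sqnorm u" and e: "\<bar>e\<bar> \<le> 1"
  shows "opos (\<lambda>w k. of_real (sqrt C) * w k + of_real e * y w k)"
  unfolding opos_def
proof (intro allI impI conjI)
  fix u assume u: "l2 u"
  have eq: "inn u (\<lambda>k. of_real (sqrt C) * u k + of_real e * y u k)
      = of_real (sqrt C * sqnorm u) + of_real e * inn u (y u)"
    using u bop_l2[OF y u] by (simp add: inn_add inn_cmult inn_self l2_cmult)
  have "\<bar>e * Re (inn u (y u))\<bar> \<le> \<bar>Re (inn u (y u))\<bar>"
    using e by (simp add: abs_mult mult_left_le_one_le)
  also have "\<dots> \<le> cmod (inn u (y u))"
    by (rule abs_Re_le_cmod)
  also have "\<dots> \<le> sqrt (sqnorm u) * sqrt (C * sqnorm u)"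
    using inn_cauchy_schwarz[OF u bop_l2[OF y u]] C(2)[OF u] sqnorm_nonneg[OF u]
    by (meson mult_left_mono order_trans real_sqrt_ge_zero real_sqrt_le_mono)
  also have "\<dots> = sqrt C * sqnorm u"
    using C(1) sqnorm_nonneg[OF u] by (simp add: real_sqrt_mult)
  finally show "0 \<le> Re (inn u (\<lambda>k. of_real (sqrt C) * u k + of_real e * y u k))"
    unfolding eq by simp
  show "Im (inn u (\<lambda>k. of_real (sqrt C) * u k + of_real e * y u k)) = 0"
    unfolding eq using sa[OF u] by simp
qed

lemma diag_entry_selfadjoint_bounded:
  assumes r: "0 < r" and lam: "0 < lam" and T: "minimal_qds r lam mu zp zm T"
    and y: "bop y" and sa: "\<And>u. l2 u \<Longrightarrow> Im (inn u (y u)) = 0"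
  obtains c where "\<And>s n. 0 \<le> s \<Longrightarrow> cmod (diag_entry T y n s) \<le> c"
proof -
  obtain C where C: "0 \<le> C" "\<And>u. l2 u \<Longrightarrow> sqnorm (y u) \<le> C * sqnorm u"
    using bop_boundE[OF y] by metis
  define P where "P e = (\<lambda>w k. of_real (sqrt C) * w k + of_real e * y w k)" for e :: real
  have P: "bop (P e)" for e
    unfolding P_def by (intro bop_add_op bop_cmult_op bop_id y)
  have "cmod (diag_entry T y n s) \<le> sqrt C" if s: "0 \<le> s" for s n
  proof -
    define a where "a = diag_entry T (\<lambda>w. w) n s"
    define z where "z = diag_entry T y n s"
    have Pdiag: "diag_entry T (P e) n s = of_real (sqrt C) * a + of_real e * z" for e
    proof -
      have "T s (P e) (basis n) = (\<lambda>k. T s (\<lambda>w k. of_real (sqrt C) * w k) (basis n) k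
          + T s (\<lambda>w k. of_real e * y w k) (basis n) k)"
        unfolding P_def by (rule minimal_qdsD(2)[OF T s bop_cmult_op[OF bop_id] bop_cmult_op[OF y] l2_basis])
      also have "\<dots> = (\<lambda>k. of_real (sqrt C) * T s (\<lambda>w. w) (basis n) k + of_real e * T s y (basis n) k)"
        using minimal_qdsD(3)[OF T s bop_id l2_basis] minimal_qdsD(3)[OF T s y l2_basis] by simp
      finally show ?thesis by (simp add: a_def z_def diag_entry_def)
    qed
    have Pnonneg: "Im (of_real (sqrt C) * a + of_real e * z) = 0 \<and> 0 \<le> Re (of_real (sqrt C) * a + of_real e * z)"
      if "\<bar>e\<bar> \<le> 1" for e
      using diag_entry_opos[OF minimal_qdsD(1)[OF T] s P opos_shift_selfadjoint[OF y sa C that, folded P_def], of n]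
      unfolding Pdiag by simp
    have "Im a = 0" "Re a \<le> 1"
      using diag_entry_opos[OF minimal_qdsD(1)[OF T] s bop_id opos_id] diag_entry_id_le_1[OF r lam T s]
      by (simp_all add: a_def)
    with Pnonneg[of 1] Pnonneg[of "-1"] have "Im z = 0" "\<bar>Re z\<bar> \<le> sqrt C * Re a"
      by auto
    moreover have "sqrt C * Re a \<le> sqrt C"
      using C(1) by (intro mult_left_le \<open>Re a \<le> 1\<close>) simp
    ultimately show ?thesis
      by (simp add: z_def[symmetric] cmod_eq_Re)
  qed
  with that show ?thesis by blast
qed

lemma diag_entry_bounded:
  assumes r: "0 < r" and lam: "0 < lam" and T: "minimal_qds r lam mu zp zm T" and x: "bop x"
  obtains B where "\<And>s n. 0 \<le> s \<Longrightarrow> cmod (diag_entry T x n s) \<le> B"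
proof -
  define h where "h = (\<lambda>w k. (1/2) * (x w k + adjoint_op x w k))"
  define g where "g = (\<lambda>w k. (- \<i>/2) * (x w k + (-1) * adjoint_op x w k))"
  have adj: "bop (adjoint_op x)" by (rule bop_adjoint_op[OF x])
  have h: "bop h" and g: "bop g" and ig: "bop (\<lambda>w k. \<i> * g w k)"
    unfolding h_def g_def by (intro bop_cmult_op bop_add_op x adj)+
  have "Im (inn u (h u)) = 0 \<and> Im (inn u (g u)) = 0" if u: "l2 u" for u
  proof -
    have xu: "l2 (x u)" and au: "l2 (adjoint_op x u)" and mau: "l2 (\<lambda>k. (-1) * adjoint_op x u k)"
      using bop_l2[OF x u] bop_l2[OF adj u] l2_cmult[OF bop_l2[OF adj u], of "-1"] by auto
    show ?thesis
      unfolding h_def g_def inn_cmult[OF u l2_add[OF xu au]] inn_add[OF u xu au]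
        inn_cmult[OF u l2_add[OF xu mau]] inn_add[OF u xu mau] inn_cmult[OF u au] inn_adjoint_op_self[OF x u]
      by simp
  qed
  then obtain c1 c2 where c1: "\<And>s n. 0 \<le> s \<Longrightarrow> cmod (diag_entry T h n s) \<le> c1"
    and c2: "\<And>s n. 0 \<le> s \<Longrightarrow> cmod (diag_entry T g n s) \<le> c2"
    using diag_entry_selfadjoint_bounded[OF r lam T h] diag_entry_selfadjoint_bounded[OF r lam T g] by metis
  have "x = (\<lambda>w k. h w k + \<i> * g w k)"
    by (simp add: h_def g_def fun_eq_iff field_simps)
  then have "diag_entry T x n s = diag_entry T h n s + \<i> * diag_entry T g n s" if "0 \<le> s" for s n
    using minimal_qdsD(2)[OF T that h ig l2_basis] minimal_qdsD(3)[OF T that g l2_basis]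
    by (simp add: diag_entry_def)
  then have "cmod (diag_entry T x n s) \<le> c1 + c2" if "0 \<le> s" for s n
    using c1[OF that, of n] c2[OF that, of n] norm_triangle_ineq[of "diag_entry T h n s" "\<i> * diag_entry T g n s"]
    by (simp add: that norm_mult)
  with that show ?thesis by blast
qed


section \<open>Conservation of the weighted diagonal sum\<close>

lemma norm_diff_le_of_vector_derivative_bound:
  fixes f :: "real \<Rightarrow> 'a::banach"
  assumes t: "0 \<le> t"
    and deriv: "\<And>s. s \<in> {0..t} \<Longrightarrow> (f has_vector_derivative f' s) (at s within {0..t})"
    and bound: "\<And>s. s \<in> {0..t} \<Longrightarrow> norm (f' s) \<le> K"
  shows "norm (f t - f 0) \<le> K * t"
proof -
  have "(f' has_integral f t - f 0) (cbox 0 t)"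
    using fundamental_theorem_of_calculus[OF t deriv] by simp
  moreover have "0 \<le> K"
    using bound[of 0] t by (auto intro: order_trans[OF norm_ge_zero])
  ultimately show ?thesis
    using has_integral_bound[of K f' "f t - f 0" 0 t] bound t by simp
qed

lemma sum_tridiagonal_telescope:
  fixes p b c :: "nat \<Rightarrow> real" and D :: "nat \<Rightarrow> complex"
  assumes b0: "b 0 = 0" and balance: "\<And>n. p (Suc n) * b (Suc n) = p n * c n"
  shows "(\<Sum>n<Suc N. of_real (p n) *
      (of_real (- (b n + c n)) * D n + of_real (b n) * D (n - 1) + of_real (c n) * D (Suc n)))
    = of_real (p N * c N) * (D (Suc N) - D N)"
proof (induction N)
  case 0
  show ?case using b0 by (simp add: algebra_simps)
next
  case (Suc N)
  have "of_real (p (Suc N)) * of_real (b (Suc N)) = (of_real (p N * c N) :: complex)"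
    using balance[of N] by (metis of_real_mult)
  with Suc.IH show ?case
    by (simp add: algebra_simps)
qed

lemma weighted_partial_sum_increment_le:
  fixes d :: "nat \<Rightarrow> real \<Rightarrow> complex" and p b c :: "nat \<Rightarrow> real"
  assumes t: "0 \<le> t"
    and deriv: "\<And>n s. s \<in> {0..t} \<Longrightarrow> (d n has_vector_derivative
      of_real (- (b n + c n)) * d n s + of_real (b n) * d (n - 1) s + of_real (c n) * d (Suc n) s)
      (at s within {0..t})"
    and bound: "\<And>n s. s \<in> {0..t} \<Longrightarrow> cmod (d n s) \<le> B"
    and b0: "b 0 = 0" and balance: "\<And>n. p (Suc n) * b (Suc n) = p n * c n"
    and nonneg: "0 \<le> p N" "0 \<le> c N"
  shows "cmod ((\<Sum>n<Suc N. of_real (p n) * d n t) - (\<Sum>n<Suc N. of_real (p n) * d n 0)) \<le> p N * c N * (2 * B) * t"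
proof (rule norm_diff_le_of_vector_derivative_bound[OF t, where f = "\<lambda>s. \<Sum>n<Suc N. of_real (p n) * d n s"])
  fix s assume s: "s \<in> {0..t}"
  show "((\<lambda>s. \<Sum>n<Suc N. of_real (p n) * d n s) has_vector_derivative
      of_real (p N * c N) * (d (Suc N) s - d N s)) (at s within {0..t})"
    unfolding sum_tridiagonal_telescope[OF b0 balance, where N = N and D = "\<lambda>n. d n s", symmetric]
    by (intro has_vector_derivative_sum has_vector_derivative_mult_right deriv s)
  have "cmod (d (Suc N) s - d N s) \<le> 2 * B"
    using norm_triangle_ineq4[of "d (Suc N) s" "d N s"] bound[OF s, of N] bound[OF s, of "Suc N"]
    by linarith
  then show "norm (of_real (p N * c N) * (d (Suc N) s - d N s)) \<le> p N * c N * (2 * B)"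
    using nonneg by (simp add: norm_mult abs_mult mult_left_mono)
qed

lemma weighted_sum_conserved:
  fixes d :: "nat \<Rightarrow> real \<Rightarrow> complex" and p b c :: "nat \<Rightarrow> real"
  assumes t: "0 \<le> t"
    and deriv: "\<And>n s. s \<in> {0..t} \<Longrightarrow> (d n has_vector_derivative
      of_real (- (b n + c n)) * d n s + of_real (b n) * d (n - 1) s + of_real (c n) * d (Suc n) s)
      (at s within {0..t})"
    and bound: "\<And>n s. s \<in> {0..t} \<Longrightarrow> cmod (d n s) \<le> B"
    and b0: "b 0 = 0" and balance: "\<And>n. p (Suc n) * b (Suc n) = p n * c n"
    and p: "\<And>n. 0 \<le> p n" "summable p" and c: "\<And>n. 0 \<le> c n"
    and flux: "(\<lambda>n. p n * c n) \<longlonglongrightarrow> 0"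
  shows "(\<Sum>n. of_real (p n) * d n t) = (\<Sum>n. of_real (p n) * d n 0)"
proof -
  define S where "S N s = (\<Sum>n<Suc N. of_real (p n) * d n s)" for N s
  have vanishing: "(\<lambda>N. S N t - S N 0) \<longlonglongrightarrow> 0"
  proof (rule LIMSEQ_by_norm_bound)
    show "norm (S N t - S N 0 - 0) \<le> p N * c N * (2 * B) * t" for N
      unfolding S_def using weighted_partial_sum_increment_le[OF t deriv bound b0 balance p(1) c] by simp
    show "(\<lambda>N. p N * c N * (2 * B) * t) \<longlonglongrightarrow> 0"
      using tendsto_mult_right[OF flux, of "2 * B * t"] unfolding mult_zero_left mult.assoc .
  qed
  have partial_sums: "(\<lambda>N. S N s) \<longlonglongrightarrow> (\<Sum>n. of_real (p n) * d n s)" if "s \<in> {0..t}" for s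
  proof -
    have "summable (\<lambda>n. of_real (p n) * d n s)"
      by (rule summable_comparison_test'[OF summable_mult2[OF p(2), of B]])
        (use p(1) bound[OF that] in \<open>simp add: norm_mult mult_left_mono\<close>)
    then show ?thesis
      unfolding S_def by (rule LIMSEQ_Suc[OF summable_LIMSEQ])
  qed
  have "(\<lambda>N. S N t - S N 0) \<longlonglongrightarrow> (\<Sum>n. of_real (p n) * d n t) - (\<Sum>n. of_real (p n) * d n 0)"
    using t by (intro tendsto_diff partial_sums) auto
  from LIMSEQ_unique[OF this vanishing] show ?thesis
    by simp
qed

definition rho_weight :: "real \<Rightarrow> nat \<Rightarrow> real" where
  "rho_weight \<nu> n = (1 - \<nu>^2) * \<nu>^(2 * n)"

lemma tr_rho_eq: "tr_rho \<nu> y = (\<Sum>n. of_real (rho_weight \<nu> n) * y (basis n) n)"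
  by (simp add: tr_rho_def rho_weight_def inn_basis_left)

lemma rho_weight_nonneg: "0 \<le> \<nu> \<Longrightarrow> \<nu> < 1 \<Longrightarrow> 0 \<le> rho_weight \<nu> n"
  unfolding rho_weight_def by (simp add: power_le_one)

lemma summable_rho_weight: "0 \<le> \<nu> \<Longrightarrow> \<nu> < 1 \<Longrightarrow> summable (rho_weight \<nu>)"
  unfolding rho_weight_def power_mult
  by (intro summable_mult summable_geometric) (simp add: abs_square_less_1)

lemma rho_weight_Suc: "rho_weight \<nu> (Suc n) = rho_weight \<nu> n * \<nu>^2"
  by (simp add: rho_weight_def power2_eq_square mult_ac)

lemma rho_weight_detailed_balance:
  assumes "0 < mu"
  shows "rho_weight (lam / mu) (Suc n) * (mu^2 * omega r (Suc n))
    = rho_weight (lam / mu) n * (lam^2 * omega r (Suc n))"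
proof -
  have "rho_weight (lam / mu) (Suc n) = rho_weight (lam / mu) n * (lam / mu)^2"
    by (rule rho_weight_Suc)
  then have "rho_weight (lam / mu) (Suc n) * (mu^2 * omega r (Suc n))
      = rho_weight (lam / mu) n * ((lam / mu)^2 * mu^2) * omega r (Suc n)"
    by (simp add: mult_ac)
  also have "(lam / mu)^2 * mu^2 = lam^2"
    using assms by (simp add: power_divide)
  finally show ?thesis by (simp add: mult_ac)
qed

lemma power_times_quadratic_tendsto_0:
  fixes q r :: real
  assumes "0 \<le> q" "q < 1"
  shows "(\<lambda>N. q ^ (2 * N) * ((real N + 1) * (real N + r))) \<longlonglongrightarrow> 0"
proof -
  have qN: "(\<lambda>N. q ^ N) \<longlonglongrightarrow> 0" and NqN: "(\<lambda>N. real N * q ^ N) \<longlonglongrightarrow> 0"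
    using LIMSEQ_power_zero[of q] powser_times_n_limit_0[of q] assms by simp_all
  have "(\<lambda>N. (real N * q ^ N + q ^ N) * (real N * q ^ N + r * q ^ N)) \<longlonglongrightarrow> (0 + 0) * (0 + r * 0)"
    by (intro tendsto_intros qN NqN)
  moreover have "(real N * q ^ N + q ^ N) * (real N * q ^ N + r * q ^ N) = q ^ (2 * N) * ((real N + 1) * (real N + r))" for N
    by (simp add: power_mult algebra_simps power2_eq_square)
  ultimately show ?thesis by simp
qed

lemma rho_weight_flux_tendsto_0:
  assumes "0 \<le> \<nu>" "\<nu> < 1"
  shows "(\<lambda>n. rho_weight \<nu> n * (lam^2 * omega r (Suc n))) \<longlonglongrightarrow> 0"
  using tendsto_mult_left[OF power_times_quadratic_tendsto_0[OF assms, of r], of "(1 - \<nu>^2) * lam^2"]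
  by (simp add: rho_weight_def omega_def mult_ac add.commute)

theorem proposition3p1:
  fixes r lam mu zp zm :: real and T :: "real \<Rightarrow> op \<Rightarrow> op"
  assumes "r > 0" and "0 < lam" and "lam < mu"
    and "minimal_qds r lam mu zp zm T"
  shows "\<forall>t\<ge>0. \<forall>x. bop x \<longrightarrow> tr_rho (lam / mu) (T t x) = tr_rho (lam / mu) x"
proof (intro allI impI)
  fix t :: real and x assume t: "t \<ge> 0" and x: "bop x"
  note T = minimal_qdsD(1)[OF assms(4)]
  have \<nu>: "0 \<le> lam / mu" "lam / mu < 1" using assms by simp_all
  obtain B where "\<And>s n. 0 \<le> s \<Longrightarrow> cmod (diag_entry T x n s) \<le> B"
    using diag_entry_bounded[OF assms(1,2,4) x] by blast
  then have "(\<Sum>n. of_real (rho_weight (lam / mu) n) * diag_entry T x n t)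
      = (\<Sum>n. of_real (rho_weight (lam / mu) n) * diag_entry T x n 0)"
    using diag_entry_has_vector_derivative[OF assms(1) T x] rho_weight_detailed_balance[of mu]
      rho_weight_nonneg[OF \<nu>] summable_rho_weight[OF \<nu>] rho_weight_flux_tendsto_0[OF \<nu>] omega_nonneg[OF assms(1)] assms
    by (intro weighted_sum_conserved[OF t, where b = "\<lambda>n. mu^2 * omega r n" and c = "\<lambda>n. lam^2 * omega r (Suc n)"])
      (auto simp: exit_rate_def add.commute)
  then show "tr_rho (lam / mu) (T t x) = tr_rho (lam / mu) x"
    by (simp add: tr_rho_eq diag_entry_def[symmetric] diag_entry_0[OF assms(1) T x])
qed

end
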